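(* Let $T$ be a linear transformation of a finite-dimensional real vector space $W$, and assume $W$ splits as a direct sum of (real) eigenspaces of $T$ with eigenvalues $\neq\pm1$. Let $W^+,W^-\subseteq W$ be subspaces with $\dim W^++\dim W^-=\dim W$ such that $W^+$ has zero intersection with the contracting subspace of $W$ and $W^-$ has zero intersection with the expanding subspace of $W$ determined by $T$. Then there is $K$ such that whenever $k^+,k^-$ are nonnegative integers with $k^++k^-\geq K$, $$W=T^{k^+}W^+\oplus T^{-k^-}W^-,$$ and moreover this decomposition is uniformly transverse in $k^\pm$: for a fixed inner product on $W$ there is $\epsilon>0$ such that for all such $k^\pm$, any unit vector in $T^{k^+}W^+$ and any unit vector in $T^{-k^-}W^-$ make an angle at least $\epsilon$.
   Context: The contracting (resp. expanding) subspace of $W$ determined by $T$ is the sum of the eigenspaces of $T$ whose eigenvalues have absolute value $<1$ (resp. $>1$). *)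

theory Defs
  imports "HOL-Analysis.Analysis"
begin

definition eigenspace :: "('a::real_vector \<Rightarrow> 'a) \<Rightarrow> real \<Rightarrow> 'a set" where
  "eigenspace T c = {x. T x = c *\<^sub>R x}"

definition contracting_subspace :: "('a::real_vector \<Rightarrow> 'a) \<Rightarrow> 'a set" where
  "contracting_subspace T = span (\<Union>{eigenspace T c | c. \<bar>c\<bar> < 1})"

definition expanding_subspace :: "('a::real_vector \<Rightarrow> 'a) \<Rightarrow> 'a set" where
  "expanding_subspace T = span (\<Union>{eigenspace T c | c. \<bar>c\<bar> > 1})"

definition vec_angle :: "'a::real_inner \<Rightarrow> 'a \<Rightarrow> real" where
  "vec_angle u v = arccos ((u \<bullet> v) / (norm u * norm v))"

end

theory Submission
  imports Defs
begin

text \<open>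
  Choose an eigenbasis \<open>B\<close> of \<open>T\<close>, split into the expanding part \<open>B\<^sup>+\<close> and the contracting
  part \<open>B\<^sup>-\<close>, and measure a vector by the \<open>\<ell>\<^sup>1\<close>-norms \<open>p\<close> and \<open>m\<close> of its \<open>B\<^sup>+\<close>- and
  \<open>B\<^sup>-\<close>-coordinates. Since \<open>W\<^sup>+\<close> misses \<open>span B\<^sup>-\<close>, the projection onto \<open>span B\<^sup>+\<close> is injective on
  \<open>W\<^sup>+\<close>, which puts \<open>W\<^sup>+\<close> into a cone \<open>m \<le> \<alpha> p\<close>. Applying \<open>T\<^sup>k\<close> does not decrease \<open>p\<close> and
  multiplies \<open>m\<close> by at most \<open>r\<^sup>k\<close> for a uniform rate \<open>r < 1\<close>, so \<open>T\<^sup>k W\<^sup>+\<close> lies in the cone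
  \<open>m \<le> r\<^sup>k \<alpha> p\<close>; symmetrically \<open>T\<^sup>-\<^sup>k W\<^sup>-\<close> lies in \<open>p \<le> r\<^sup>k \<beta> m\<close>. Once \<open>k\<^sup>+ + k\<^sup>-\<close> is
  large, one of the two cones is thin while the other stays bounded, and unit vectors in such
  a pair of cones are a uniform distance apart. This gives the angle bound and a trivial
  intersection, and the dimension count turns the latter into a direct sum.
\<close>

lemma linear_funpow:
  fixes f :: "'a::real_vector \<Rightarrow> 'a"
  assumes "linear f"
  shows "linear (f ^^ n)"
  by (induction n) (simp_all add: linear_id[unfolded id_def] linear_compose[OF _ assms, unfolded o_def])

lemma linear_representation:
  assumes "independent B" "span B = UNIV"
  shows "linear (\<lambda>x. representation B x b)"
  by (rule linearI) (simp_all add: representation_add representation_scale assms)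

lemma representation_sum_scale:
  assumes "independent B" "finite P" "P \<subseteq> B"
  shows "representation B (\<Sum>b'\<in>P. c b' *\<^sub>R b') b = (if b \<in> P then c b else 0)"
proof -
  have in_span: "b' \<in> span B" if "b' \<in> P" for b'
    using that assms(3) by (auto intro: span_base)
  have "representation B (\<Sum>b'\<in>P. c b' *\<^sub>R b') b = (\<Sum>b'\<in>P. c b' * representation B b' b)"
    using assms(1) in_span by (simp add: representation_sum representation_scale span_scale)
  also have "\<dots> = (\<Sum>b'\<in>P. if b = b' then c b' else 0)"
  proof (intro sum.cong refl)
    fix b' assume "b' \<in> P"
    then have "representation B b' = (\<lambda>v. if v = b' then 1 else 0)"
      using assms(1,3) representation_basis by blast
    then show "c b' * representation B b' b = (if b = b' then c b' else 0)"
      by simp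
  qed
  finally show ?thesis
    using assms(2) by simp
qed

lemma representation_eigen_funpow:
  fixes B :: "'a::euclidean_space set"
  assumes B: "independent B" "span B = UNIV"
    and "linear S" and eigen: "\<And>b. b \<in> B \<Longrightarrow> S b = \<mu> b *\<^sub>R b"
  shows "representation B ((S ^^ k) x) b = \<mu> b ^ k * representation B x b"
proof -
  have fin: "finite B"
    using B(1) by (rule finiteI_independent)
  have step: "representation B (S y) b = \<mu> b * representation B y b" for y
  proof -
    have "y = (\<Sum>b'\<in>B. representation B y b' *\<^sub>R b')"
      using sum_representation_eq[OF B(1) _ fin] B(2) by simp
    then have "S y = (\<Sum>b'\<in>B. representation B y b' *\<^sub>R S b')"
      using \<open>linear S\<close> by (metis (no_types, lifting) linear_sum linear_scale sum.cong)
    also have "\<dots> = (\<Sum>b'\<in>B. (\<mu> b' * representation B y b') *\<^sub>R b')"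
      by (intro sum.cong refl) (simp add: eigen)
    finally have "S y = (\<Sum>b'\<in>B. (\<mu> b' * representation B y b') *\<^sub>R b')" .
    then show ?thesis
      using representation_sum_scale[OF B(1) fin order_refl, of "\<lambda>b'. \<mu> b' * representation B y b'" b]
        representation_ne_zero[of B y b] by auto
  qed
  show ?thesis
    by (induction k) (simp_all add: step)
qed

definition coord_norm :: "'a::euclidean_space set \<Rightarrow> 'a set \<Rightarrow> 'a \<Rightarrow> real" where
  "coord_norm B C x = (\<Sum>b\<in>C. \<bar>representation B x b\<bar>)"

lemma coord_norm_nonneg: "0 \<le> coord_norm B C x"
  unfolding coord_norm_def by (simp add: sum_nonneg)

lemma coord_norm_triangle:
  assumes "independent B" "span B = UNIV"
  shows "coord_norm B C x \<le> coord_norm B C y + coord_norm B C (x - y)"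
  unfolding coord_norm_def
  by (simp add: representation_diff assms sum.distrib[symmetric] sum_mono abs_triangle_ineq4)

lemma coord_norm_minus_commute:
  assumes "independent B" "span B = UNIV"
  shows "coord_norm B C (x - y) = coord_norm B C (y - x)"
  unfolding coord_norm_def by (simp add: representation_diff assms abs_minus_commute)

lemma coord_norm_Un:
  assumes "finite P" "finite Q" "P \<inter> Q = {}"
  shows "coord_norm B (P \<union> Q) x = coord_norm B P x + coord_norm B Q x"
  unfolding coord_norm_def using assms by (rule sum.union_disjoint)

lemma norm_le_coord_norm:
  fixes B :: "'a::euclidean_space set"
  assumes B: "independent B" "span B = UNIV"
  shows "\<exists>c>0. \<forall>x. norm x \<le> c * coord_norm B B x"
proof (intro exI[of _ "1 + (\<Sum>b\<in>B. norm b)"] conjI allI)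
  show "0 < 1 + (\<Sum>b\<in>B. norm b)"
    by (simp add: add_pos_nonneg sum_nonneg)
  fix x
  have fin: "finite B"
    using B(1) by (rule finiteI_independent)
  have coord_le: "\<bar>representation B x b\<bar> \<le> coord_norm B B x" if "b \<in> B" for b
    unfolding coord_norm_def using fin that by (intro member_le_sum) auto
  have "norm x = norm (\<Sum>b\<in>B. representation B x b *\<^sub>R b)"
    using sum_representation_eq[OF B(1) _ fin] B(2) by simp
  also have "\<dots> \<le> (\<Sum>b\<in>B. \<bar>representation B x b\<bar> * norm b)"
    by (rule norm_sum[THEN order_trans]) simp
  also have "\<dots> \<le> (\<Sum>b\<in>B. coord_norm B B x * norm b)"
    by (intro sum_mono mult_right_mono coord_le) auto
  also have "\<dots> = coord_norm B B x * (\<Sum>b\<in>B. norm b)"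
    by (simp add: sum_distrib_left)
  also have "\<dots> \<le> (1 + (\<Sum>b\<in>B. norm b)) * coord_norm B B x"
    by (simp add: algebra_simps coord_norm_nonneg)
  finally show "norm x \<le> (1 + (\<Sum>b\<in>B. norm b)) * coord_norm B B x" .
qed

lemma coord_norm_le_norm:
  fixes B :: "'a::euclidean_space set"
  assumes "independent B" "span B = UNIV" "finite C"
  shows "\<exists>c>0. \<forall>x. coord_norm B C x \<le> c * norm x"
proof -
  have "\<exists>K. \<forall>x. \<bar>representation B x b\<bar> \<le> norm x * K" for b
    using linear_representation[OF assms(1,2)] linear_conv_bounded_linear bounded_linear.bounded
    by fastforce
  then obtain K where K: "\<And>b x. \<bar>representation B x b\<bar> \<le> norm x * K b"
    by metis
  show ?thesis
  proof (intro exI[of _ "1 + (\<Sum>b\<in>C. \<bar>K b\<bar>)"] conjI allI)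
    show "0 < 1 + (\<Sum>b\<in>C. \<bar>K b\<bar>)"
      by (simp add: add_pos_nonneg sum_nonneg)
    fix x
    have "coord_norm B C x \<le> (\<Sum>b\<in>C. norm x * \<bar>K b\<bar>)"
      unfolding coord_norm_def
      by (intro sum_mono order_trans[OF K] mult_left_mono) auto
    also have "\<dots> \<le> (1 + (\<Sum>b\<in>C. \<bar>K b\<bar>)) * norm x"
      by (simp add: sum_distrib_left[symmetric] algebra_simps)
    finally show "coord_norm B C x \<le> (1 + (\<Sum>b\<in>C. \<bar>K b\<bar>)) * norm x" .
  qed
qed

lemma coord_norm_eigen_funpow:
  fixes B :: "'a::euclidean_space set"
  assumes "independent B" "span B = UNIV"
    and "linear S" "\<And>b. b \<in> B \<Longrightarrow> S b = \<mu> b *\<^sub>R b"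
  shows "coord_norm B C ((S ^^ k) x) = (\<Sum>b\<in>C. \<bar>\<mu> b\<bar> ^ k * \<bar>representation B x b\<bar>)"
  unfolding coord_norm_def by (simp add: representation_eigen_funpow[OF assms] abs_mult power_abs)

lemma coord_norm_funpow_le:
  fixes B :: "'a::euclidean_space set"
  assumes "independent B" "span B = UNIV"
    and "linear S" "\<And>b. b \<in> B \<Longrightarrow> S b = \<mu> b *\<^sub>R b"
    and "\<And>b. b \<in> C \<Longrightarrow> \<bar>\<mu> b\<bar> \<le> r"
  shows "coord_norm B C ((S ^^ k) x) \<le> r ^ k * coord_norm B C x"
proof -
  have "coord_norm B C ((S ^^ k) x) = (\<Sum>b\<in>C. \<bar>\<mu> b\<bar> ^ k * \<bar>representation B x b\<bar>)"
    by (rule coord_norm_eigen_funpow[OF assms(1-4)])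
  also have "\<dots> \<le> (\<Sum>b\<in>C. r ^ k * \<bar>representation B x b\<bar>)"
    by (intro sum_mono mult_right_mono power_mono assms(5)) auto
  finally show ?thesis
    by (simp add: coord_norm_def sum_distrib_left)
qed

lemma coord_norm_funpow_ge:
  fixes B :: "'a::euclidean_space set"
  assumes "independent B" "span B = UNIV"
    and "linear S" "\<And>b. b \<in> B \<Longrightarrow> S b = \<mu> b *\<^sub>R b"
    and "\<And>b. b \<in> C \<Longrightarrow> 1 \<le> \<bar>\<mu> b\<bar>"
  shows "coord_norm B C x \<le> coord_norm B C ((S ^^ k) x)"
proof -
  have "coord_norm B C x \<le> (\<Sum>b\<in>C. \<bar>\<mu> b\<bar> ^ k * \<bar>representation B x b\<bar>)"
    unfolding coord_norm_def
    by (intro sum_mono) (simp add: assms(5) mult_le_cancel_right1 one_le_power)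
  then show ?thesis
    by (simp only: coord_norm_eigen_funpow[OF assms(1-4)])
qed

lemma in_span_if_coords_vanish:
  fixes B :: "'a::euclidean_space set"
  assumes B: "independent B" "span B = UNIV" and BPQ: "B = P \<union> Q"
    and vanish: "\<And>b. b \<in> P \<Longrightarrow> representation B x b = 0"
  shows "x \<in> span Q"
proof -
  let ?R = "representation B"
  have "?R x b *\<^sub>R b \<in> span Q" for b
    using vanish representation_ne_zero[of B x b] BPQ
    by (cases "?R x b = 0") (auto intro: span_base span_scale span_zero)
  then have "(\<Sum>b\<in>B. ?R x b *\<^sub>R b) \<in> span Q"
    by (intro span_sum)
  moreover have "x = (\<Sum>b\<in>B. ?R x b *\<^sub>R b)"
    using sum_representation_eq[OF B(1) _ finiteI_independent[OF B(1)]] B(2) by simp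
  ultimately show ?thesis
    by simp
qed

lemma coord_norm_cone:
  fixes B :: "'a::euclidean_space set"
  assumes B: "independent B" "span B = UNIV" and BPQ: "B = P \<union> Q"
    and W: "subspace W" and WQ: "W \<inter> span Q \<subseteq> {0}"
  shows "\<exists>\<alpha>\<ge>0. \<forall>w\<in>W. coord_norm B Q w \<le> \<alpha> * coord_norm B P w"
proof -
  let ?R = "representation B"
  have fin: "finite P" "finite Q"
    using finiteI_independent[OF B(1)] BPQ by auto
  define proj where "proj x = (\<Sum>b\<in>P. ?R x b *\<^sub>R b)" for x
  have rep_proj: "?R (proj x) b = (if b \<in> P then ?R x b else 0)" for x b
    unfolding proj_def using representation_sum_scale[OF B(1) fin(1)] BPQ by blast
  have "linear proj"
    unfolding proj_def
    by (intro linear_compose_sum ballI linearI)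
       (simp_all add: representation_add representation_scale B scaleR_add_left)
  then have "bounded_linear proj"
    by (rule linear_conv_bounded_linear[THEN iffD1])
  moreover have "x = 0" if "x \<in> W" "proj x = 0" for x
  proof -
    have "?R x b = 0" if "b \<in> P" for b
      using rep_proj[of x b] \<open>proj x = 0\<close> that by (simp add: representation_zero)
    then have "x \<in> span Q"
      using in_span_if_coords_vanish[OF B BPQ] by blast
    then show "x = 0"
      using \<open>x \<in> W\<close> WQ by blast
  qed
  ultimately obtain e where e: "e > 0" "\<And>x. x \<in> W \<Longrightarrow> e * norm x \<le> norm (proj x)"
    using injective_imp_isometric[OF closed_subspace[OF W] W] by blast
  obtain c where c: "c > 0" "\<And>x. norm x \<le> c * coord_norm B B x"
    using norm_le_coord_norm[OF B] by blast
  obtain c' where c': "c' > 0" "\<And>x. coord_norm B Q x \<le> c' * norm x"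
    using coord_norm_le_norm[OF B fin(2)] by blast
  have proj_coord: "coord_norm B B (proj x) = coord_norm B P x" for x
    unfolding coord_norm_def rep_proj using BPQ fin
    by (intro sum.mono_neutral_cong_right) auto
  show ?thesis
  proof (intro exI[of _ "c' * c / e"] conjI ballI)
    show "0 \<le> c' * c / e"
      using c c' e by simp
    fix w assume "w \<in> W"
    have "coord_norm B Q w \<le> c' * norm w"
      by (rule c')
    also have "\<dots> \<le> c' * (norm (proj w) / e)"
      using e \<open>w \<in> W\<close> c' by (intro mult_left_mono) (simp_all add: field_simps)
    also have "\<dots> \<le> c' * (c * coord_norm B P w / e)"
      using c(2)[of "proj w"] c' e by (intro mult_left_mono divide_right_mono) (simp_all add: proj_coord)
    finally show "coord_norm B Q w \<le> c' * c / e * coord_norm B P w"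
      by simp
  qed
qed

lemma funpow_image_coord_cone:
  fixes B :: "'a::euclidean_space set"
  assumes B: "independent B" "span B = UNIV" and BPQ: "B = P \<union> Q"
    and S: "linear S" "\<And>b. b \<in> B \<Longrightarrow> S b = \<mu> b *\<^sub>R b"
    and expanding: "\<And>b. b \<in> P \<Longrightarrow> 1 \<le> \<bar>\<mu> b\<bar>"
    and contracting: "\<And>b. b \<in> Q \<Longrightarrow> \<bar>\<mu> b\<bar> \<le> r" and "0 \<le> r"
    and W: "subspace W" "W \<inter> span Q \<subseteq> {0}"
  shows "\<exists>\<alpha>\<ge>0. \<forall>k. \<forall>u\<in>(S ^^ k) ` W. coord_norm B Q u \<le> r ^ k * \<alpha> * coord_norm B P u"
proof -
  obtain \<alpha> where "\<alpha> \<ge> 0" and \<alpha>: "\<And>w. w \<in> W \<Longrightarrow> coord_norm B Q w \<le> \<alpha> * coord_norm B P w"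
    using coord_norm_cone[OF B BPQ W] by blast
  have "coord_norm B Q ((S ^^ k) w) \<le> r ^ k * \<alpha> * coord_norm B P ((S ^^ k) w)" if "w \<in> W" for k w
  proof -
    have "coord_norm B Q ((S ^^ k) w) \<le> r ^ k * coord_norm B Q w"
      using coord_norm_funpow_le[OF B S contracting] .
    also have "\<dots> \<le> r ^ k * (\<alpha> * coord_norm B P w)"
      using \<alpha>[OF that] \<open>0 \<le> r\<close> by (intro mult_left_mono) auto
    also have "\<dots> \<le> r ^ k * (\<alpha> * coord_norm B P ((S ^^ k) w))"
      using coord_norm_funpow_ge[OF B S expanding] \<open>0 \<le> r\<close> \<open>\<alpha> \<ge> 0\<close>
      by (intro mult_left_mono) auto
    finally show ?thesis
      by (simp add: mult.assoc)
  qed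
  then show ?thesis
    using \<open>\<alpha> \<ge> 0\<close> by blast
qed

lemma coord_cone_separation:
  fixes B :: "'a::euclidean_space set"
  assumes B: "independent B" "span B = UNIV"
    and u: "coord_norm B Q u \<le> a * coord_norm B P u"
    and v: "coord_norm B P v \<le> b * coord_norm B Q v"
    and ab: "0 \<le> a" "a \<le> 1" "0 \<le> b" "a * b \<le> 1/2"
  shows "coord_norm B P u + coord_norm B Q u
    \<le> 4 * (b + 1) * (coord_norm B P (u - v) + coord_norm B Q (u - v))"
proof -
  let ?p = "coord_norm B P" and ?q = "coord_norm B Q"
  let ?D = "?p (u - v) + ?q (u - v)"
  \<comment> \<open>Chaining both cone conditions through the triangle inequality gives
     \<open>p u \<le> a b p u + (b + 1) D\<close>, and \<open>a b \<le> 1/2\<close> absorbs the first term.\<close>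
  have "?q v \<le> ?q u + ?q (u - v)"
    using coord_norm_triangle[OF B, of Q v u] coord_norm_minus_commute[OF B, of Q v u] by simp
  also have "\<dots> \<le> a * ?p u + ?D"
    using u coord_norm_nonneg[of B P "u - v"] by simp
  finally have "b * ?q v \<le> b * (a * ?p u + ?D)"
    using ab by (simp add: mult_left_mono)
  moreover have "?p u \<le> b * ?q v + ?p (u - v)"
    using coord_norm_triangle[OF B, of P u v] v by simp
  moreover have "a * b * ?p u \<le> ?p u / 2"
    using ab coord_norm_nonneg[of B P u] mult_right_mono[of "a * b" "1/2" "?p u"] by simp
  moreover have "b * ?D + ?p (u - v) \<le> (b + 1) * ?D"
    using coord_norm_nonneg[of B Q "u - v"] by (simp add: algebra_simps)
  ultimately have "?p u \<le> 2 * ((b + 1) * ?D)"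
    by (simp add: algebra_simps)
  moreover have "?q u \<le> ?p u"
    using u ab coord_norm_nonneg[of B P u] mult_right_mono[of a 1 "?p u"] by simp
  ultimately show ?thesis
    by (simp only: mult.assoc)
qed

lemma coord_cone_unit_apart:
  fixes B :: "'a::euclidean_space set"
  assumes B: "independent B" "span B = UNIV"
    and c: "\<And>x. norm x \<le> c * (coord_norm B P x + coord_norm B Q x)"
    and c': "\<And>x. coord_norm B P x + coord_norm B Q x \<le> c' * norm x"
    and u: "coord_norm B Q u \<le> a * coord_norm B P u" "norm u = 1"
    and v: "coord_norm B P v \<le> b * coord_norm B Q v"
    and ab: "0 \<le> a" "a \<le> 1" "0 \<le> b" "a * b \<le> 1/2"
  shows "1 \<le> 4 * (b + 1) * c * c' * norm (u - v)"
proof -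
  let ?N = "\<lambda>x. coord_norm B P x + coord_norm B Q x"
  have "0 \<le> c"
    using c[of u] u(2) coord_norm_nonneg[of B] by (smt (verit) mult_nonpos_nonneg)
  have "1 \<le> c * ?N u"
    using c[of u] u(2) by simp
  also have "\<dots> \<le> c * (4 * (b + 1) * ?N (u - v))"
    using coord_cone_separation[OF B u(1) v ab] \<open>0 \<le> c\<close> by (rule mult_left_mono)
  also have "\<dots> \<le> c * (4 * (b + 1) * (c' * norm (u - v)))"
    using c'[of "u - v"] \<open>0 \<le> c\<close> ab(3) by (simp add: mult_left_mono)
  finally show ?thesis
    by (simp add: mult_ac)
qed

lemma eventually_power_cone_small:
  fixes r \<alpha> \<beta> :: real
  assumes r: "0 \<le> r" "r < 1" and "0 \<le> \<alpha>" "0 \<le> \<beta>"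
  shows "\<forall>\<^sub>F k in sequentially. \<forall>k'. r ^ k * \<alpha> \<le> 1 \<and> r ^ k * \<alpha> * (r ^ k' * \<beta>) \<le> 1/2"
proof -
  have "(\<lambda>k. r ^ k * (\<alpha> * (1 + \<beta>))) \<longlonglongrightarrow> 0"
    using r by (intro tendsto_mult_left_zero LIMSEQ_power_zero) simp
  then have "\<forall>\<^sub>F k in sequentially. r ^ k * (\<alpha> * (1 + \<beta>)) < 1/2"
    by (rule order_tendstoD(2)) simp
  then show ?thesis
  proof (rule eventually_mono, intro allI conjI)
    fix k k' assume small: "r ^ k * (\<alpha> * (1 + \<beta>)) < 1/2"
    have "\<alpha> \<le> \<alpha> * (1 + \<beta>)"
      using \<open>0 \<le> \<alpha>\<close> \<open>0 \<le> \<beta>\<close> by (simp add: algebra_simps)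
    then have "r ^ k * \<alpha> \<le> r ^ k * (\<alpha> * (1 + \<beta>))"
      using r by (simp add: mult_left_mono)
    have "r ^ k' * \<beta> \<le> \<beta>"
      using r \<open>0 \<le> \<beta>\<close> by (simp add: mult_left_le_one_le power_le_one)
    then have "r ^ k * \<alpha> * (r ^ k' * \<beta>) \<le> r ^ k * \<alpha> * \<beta>"
      using r \<open>0 \<le> \<alpha>\<close> by (simp add: mult_left_mono)
    also have "\<dots> \<le> r ^ k * (\<alpha> * (1 + \<beta>))"
      using r \<open>0 \<le> \<alpha>\<close> by (simp add: algebra_simps)
    finally show "r ^ k * \<alpha> * (r ^ k' * \<beta>) \<le> 1/2"
      using small by linarith
    show "r ^ k * \<alpha> \<le> 1"
      using small \<open>r ^ k * \<alpha> \<le> r ^ k * (\<alpha> * (1 + \<beta>))\<close> by linarith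
  qed
qed

lemma coord_cones_eventually_apart:
  fixes B :: "'a::euclidean_space set" and U V :: "nat \<Rightarrow> 'a set"
  assumes B: "independent B" "span B = UNIV" and BPQ: "B = P \<union> Q" "P \<inter> Q = {}"
    and r: "0 \<le> r" "r < 1" and "0 \<le> \<alpha>" "0 \<le> \<beta>"
    and U: "\<And>k u. u \<in> U k \<Longrightarrow> coord_norm B Q u \<le> r ^ k * \<alpha> * coord_norm B P u"
    and V: "\<And>k v. v \<in> V k \<Longrightarrow> coord_norm B P v \<le> r ^ k * \<beta> * coord_norm B Q v"
  shows "\<exists>K. \<exists>\<delta>>0. \<forall>kp km u v. K \<le> kp + km \<longrightarrow> u \<in> U kp \<longrightarrow> v \<in> V km \<longrightarrow>
           norm u = 1 \<longrightarrow> norm v = 1 \<longrightarrow> \<delta> \<le> norm (u - v)"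
proof -
  have fin: "finite P" "finite Q"
    using finiteI_independent[OF B(1)] BPQ by auto
  obtain c where c: "c > 0" "\<And>x. norm x \<le> c * (coord_norm B P x + coord_norm B Q x)"
    using norm_le_coord_norm[OF B] unfolding BPQ(1) coord_norm_Un[OF fin BPQ(2)] by blast
  obtain c' where c': "c' > 0" "\<And>x. coord_norm B P x + coord_norm B Q x \<le> c' * norm x"
    using coord_norm_le_norm[OF B finiteI_independent[OF B(1)]]
    unfolding BPQ(1) coord_norm_Un[OF fin BPQ(2)] by blast
  obtain K0 where K0: "\<And>k k'. k \<ge> K0 \<Longrightarrow> r ^ k * \<alpha> \<le> 1 \<and> r ^ k * \<alpha> * (r ^ k' * \<beta>) \<le> 1/2"
    "\<And>k k'. k \<ge> K0 \<Longrightarrow> r ^ k * \<beta> \<le> 1 \<and> r ^ k * \<beta> * (r ^ k' * \<alpha>) \<le> 1/2"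
    using eventually_conj[OF eventually_power_cone_small[OF r \<open>0 \<le> \<alpha>\<close> \<open>0 \<le> \<beta>\<close>]
        eventually_power_cone_small[OF r \<open>0 \<le> \<beta>\<close> \<open>0 \<le> \<alpha>\<close>]]
    unfolding eventually_sequentially by blast
  have bounded: "0 \<le> r ^ k * \<alpha>" "r ^ k * \<alpha> \<le> \<alpha>" "0 \<le> r ^ k * \<beta>" "r ^ k * \<beta> \<le> \<beta>" for k
    using r \<open>0 \<le> \<alpha>\<close> \<open>0 \<le> \<beta>\<close> by (simp_all add: mult_left_le_one_le power_le_one)
  have apart: "1 \<le> 4 * (\<alpha> + \<beta> + 1) * c * c' * norm (u - v)"
    if K: "2 * K0 \<le> kp + km" and uv: "u \<in> U kp" "v \<in> V km" "norm u = 1" "norm v = 1" for kp km u v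
  proof (cases "kp \<ge> K0")
    case True
    have "1 \<le> 4 * (r ^ km * \<beta> + 1) * c * c' * norm (u - v)"
      using bounded K0(1)[OF True]
      by (intro coord_cone_unit_apart[OF B c(2) c'(2) U[OF uv(1)] uv(3) V[OF uv(2)]]) auto
    also have "\<dots> \<le> 4 * (\<alpha> + \<beta> + 1) * c * c' * norm (u - v)"
      using bounded(4)[of km] \<open>0 \<le> \<alpha>\<close> c(1) c'(1) by (intro mult_right_mono) auto
    finally show ?thesis .
  next
    case False
    \<comment> \<open>now the cone containing \<open>v\<close> is the thin one, so the roles of \<open>P\<close> and \<open>Q\<close> are exchanged\<close>
    then have "km \<ge> K0"
      using K by linarith
    have "1 \<le> 4 * (r ^ kp * \<alpha> + 1) * c * c' * norm (v - u)"
      using bounded K0(2)[OF \<open>km \<ge> K0\<close>] c(2) c'(2)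
      by (intro coord_cone_unit_apart[OF B _ _ V[OF uv(2)] uv(4) U[OF uv(1)]]) (auto simp: add.commute)
    also have "\<dots> = 4 * (r ^ kp * \<alpha> + 1) * c * c' * norm (u - v)"
      by (simp add: norm_minus_commute)
    also have "\<dots> \<le> 4 * (\<alpha> + \<beta> + 1) * c * c' * norm (u - v)"
      using bounded(2)[of kp] \<open>0 \<le> \<beta>\<close> c(1) c'(1) by (intro mult_right_mono) auto
    finally show ?thesis .
  qed
  have "0 < 4 * (\<alpha> + \<beta> + 1) * c * c'"
    using c(1) c'(1) \<open>0 \<le> \<alpha>\<close> \<open>0 \<le> \<beta>\<close> by simp
  with apart show ?thesis
    by (intro exI[of _ "2 * K0"] exI[of _ "1 / (4 * (\<alpha> + \<beta> + 1) * c * c')"])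
       (auto simp: pos_divide_le_eq mult.commute)
qed

lemma eigenbasis_exists:
  fixes T :: "'a::euclidean_space \<Rightarrow> 'a"
  assumes "span (\<Union>{eigenspace T c | c. P c}) = UNIV"
  obtains B \<mu> where "independent B" "span B = UNIV" "\<And>b. b \<in> B \<Longrightarrow> T b = \<mu> b *\<^sub>R b \<and> P (\<mu> b)"
proof -
  let ?S = "\<Union>{eigenspace T c | c. P c}"
  obtain B where "B \<subseteq> ?S" "independent B" "?S \<subseteq> span B"
    using maximal_independent_subset[of ?S] by blast
  moreover from \<open>B \<subseteq> ?S\<close> have "\<forall>b\<in>B. \<exists>c. T b = c *\<^sub>R b \<and> P c"
    unfolding eigenspace_def by blast
  then obtain \<mu> where "\<And>b. b \<in> B \<Longrightarrow> T b = \<mu> b *\<^sub>R b \<and> P (\<mu> b)"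
    by metis
  moreover have "span B = UNIV"
    using span_mono[OF \<open>?S \<subseteq> span B\<close>] assms by (simp add: span_span top_le)
  ultimately show thesis
    using that by blast
qed

lemma inv_eigenvector:
  fixes T :: "'a::real_vector \<Rightarrow> 'a"
  assumes "linear T" "bij T" "T b = c *\<^sub>R b" "b \<noteq> 0"
  shows "c \<noteq> 0" "inv T b = inverse c *\<^sub>R b"
proof -
  show "c \<noteq> 0"
    using assms bij_is_inj linear_0 by (metis injD scale_zero_left)
  then have "T (inverse c *\<^sub>R b) = b"
    using assms(1,3) by (simp add: linear_scale)
  then show "inv T b = inverse c *\<^sub>R b"
    using bij_is_inj[OF assms(2)] inv_f_f by metis
qed

lemma uniform_hyperbolic_rate:
  fixes \<mu> :: "'b \<Rightarrow> real"
  assumes "finite B" "\<And>b. b \<in> B \<Longrightarrow> \<bar>\<mu> b\<bar> \<noteq> 1"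
  obtains r where "0 \<le> r" "r < 1"
    "\<And>b. b \<in> B \<Longrightarrow> \<bar>\<mu> b\<bar> < 1 \<Longrightarrow> \<bar>\<mu> b\<bar> \<le> r"
    "\<And>b. b \<in> B \<Longrightarrow> 1 < \<bar>\<mu> b\<bar> \<Longrightarrow> inverse \<bar>\<mu> b\<bar> \<le> r"
proof
  define \<rho> where "\<rho> b = (if \<bar>\<mu> b\<bar> < 1 then \<bar>\<mu> b\<bar> else inverse \<bar>\<mu> b\<bar>)" for b
  define r where "r = Max (insert 0 (\<rho> ` B))"
  have "\<rho> b < 1" if "b \<in> B" for b
    using assms(2)[OF that] by (auto simp: \<rho>_def inverse_less_1_iff)
  then show "r < 1"
    unfolding r_def using assms(1) by (subst Max_less_iff) auto
  show "0 \<le> r"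
    unfolding r_def using assms(1) by (simp add: Max_ge_iff)
  have \<rho>_le: "\<rho> b \<le> r" if "b \<in> B" for b
    unfolding r_def using assms(1) that by (intro Max_ge) auto
  show "\<bar>\<mu> b\<bar> \<le> r" if "b \<in> B" "\<bar>\<mu> b\<bar> < 1" for b
    using \<rho>_le[OF that(1)] that(2) by (simp add: \<rho>_def)
  show "inverse \<bar>\<mu> b\<bar> \<le> r" if "b \<in> B" "1 < \<bar>\<mu> b\<bar>" for b
    using \<rho>_le[OF that(1)] that(2) by (simp add: \<rho>_def)
qed

lemma hyperbolic_eigenbasis:
  fixes T :: "'a::euclidean_space \<Rightarrow> 'a"
  assumes T: "linear T" "bij T" and eigen: "span (\<Union>{eigenspace T c | c. c \<noteq> 1 \<and> c \<noteq> -1}) = UNIV"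
  obtains B Bp Bm \<mu> r where "independent B" "span B = UNIV" "B = Bp \<union> Bm" "Bp \<inter> Bm = {}"
    "\<And>b. b \<in> B \<Longrightarrow> T b = \<mu> b *\<^sub>R b" "\<And>b. b \<in> B \<Longrightarrow> inv T b = inverse (\<mu> b) *\<^sub>R b"
    "0 \<le> r" "r < 1"
    "\<And>b. b \<in> Bp \<Longrightarrow> 1 \<le> \<bar>\<mu> b\<bar>" "\<And>b. b \<in> Bp \<Longrightarrow> \<bar>inverse (\<mu> b)\<bar> \<le> r"
    "\<And>b. b \<in> Bm \<Longrightarrow> 1 \<le> \<bar>inverse (\<mu> b)\<bar>" "\<And>b. b \<in> Bm \<Longrightarrow> \<bar>\<mu> b\<bar> \<le> r"
    "span Bp \<subseteq> expanding_subspace T" "span Bm \<subseteq> contracting_subspace T"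
proof -
  obtain B \<mu> where B: "independent B" "span B = UNIV"
    and \<mu>: "\<And>b. b \<in> B \<Longrightarrow> T b = \<mu> b *\<^sub>R b \<and> \<mu> b \<noteq> 1 \<and> \<mu> b \<noteq> -1"
    using eigenbasis_exists[OF eigen] by blast
  have "b \<noteq> 0" if "b \<in> B" for b
    using B(1) that dependent_zero by blast
  then have \<mu>_nonzero: "\<mu> b \<noteq> 0" and inv_T: "inv T b = inverse (\<mu> b) *\<^sub>R b" if "b \<in> B" for b
    using inv_eigenvector[OF T] \<mu> that by blast+
  have "\<bar>\<mu> b\<bar> \<noteq> 1" if "b \<in> B" for b
    using \<mu>[OF that] by (auto simp: abs_if split: if_splits)
  then obtain r where r: "0 \<le> r" "r < 1"
    "\<And>b. b \<in> B \<Longrightarrow> \<bar>\<mu> b\<bar> < 1 \<Longrightarrow> \<bar>\<mu> b\<bar> \<le> r"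
    "\<And>b. b \<in> B \<Longrightarrow> 1 < \<bar>\<mu> b\<bar> \<Longrightarrow> inverse \<bar>\<mu> b\<bar> \<le> r"
    using uniform_hyperbolic_rate[OF finiteI_independent[OF B(1)]] by blast
  define Bp where "Bp = {b\<in>B. 1 < \<bar>\<mu> b\<bar>}"
  define Bm where "Bm = {b\<in>B. \<bar>\<mu> b\<bar> < 1}"
  have "B = Bp \<union> Bm" "Bp \<inter> Bm = {}"
    unfolding Bp_def Bm_def using \<open>\<And>b. b \<in> B \<Longrightarrow> \<bar>\<mu> b\<bar> \<noteq> 1\<close> by (auto simp: neq_iff)
  moreover have "1 \<le> \<bar>inverse (\<mu> b)\<bar>" if "b \<in> Bm" for b
    using that \<mu>_nonzero unfolding Bm_def by (simp add: one_le_inverse)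
  moreover have "span Bp \<subseteq> expanding_subspace T"
    unfolding expanding_subspace_def eigenspace_def Bp_def using \<mu> by (intro span_mono) blast
  moreover have "span Bm \<subseteq> contracting_subspace T"
    unfolding contracting_subspace_def eigenspace_def Bm_def using \<mu> by (intro span_mono) blast
  ultimately show thesis
    using that[OF B _ _ _ inv_T r(1,2)] \<mu> r(3,4) unfolding Bp_def Bm_def by (force simp: abs_inverse)
qed

lemma hyperbolic_images_eventually_apart:
  fixes T :: "'a::euclidean_space \<Rightarrow> 'a"
  assumes T: "linear T" "bij T" "span (\<Union>{eigenspace T c | c. c \<noteq> 1 \<and> c \<noteq> -1}) = UNIV"
    and W: "subspace Wp" "subspace Wm"
      "Wp \<inter> contracting_subspace T = {0}" "Wm \<inter> expanding_subspace T = {0}"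
  shows "\<exists>K. \<exists>\<delta>>0. \<forall>kp km u v. K \<le> kp + km \<longrightarrow> u \<in> (T ^^ kp) ` Wp \<longrightarrow> v \<in> (inv T ^^ km) ` Wm \<longrightarrow>
           norm u = 1 \<longrightarrow> norm v = 1 \<longrightarrow> \<delta> \<le> norm (u - v)"
proof -
  obtain B Bp Bm \<mu> r where B: "independent B" "span B = UNIV" "B = Bp \<union> Bm" "Bp \<inter> Bm = {}"
    and eigen: "\<And>b. b \<in> B \<Longrightarrow> T b = \<mu> b *\<^sub>R b" "\<And>b. b \<in> B \<Longrightarrow> inv T b = inverse (\<mu> b) *\<^sub>R b"
    and r: "0 \<le> r" "r < 1"
    and Bp: "\<And>b. b \<in> Bp \<Longrightarrow> 1 \<le> \<bar>\<mu> b\<bar>" "\<And>b. b \<in> Bp \<Longrightarrow> \<bar>inverse (\<mu> b)\<bar> \<le> r"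
    and Bm: "\<And>b. b \<in> Bm \<Longrightarrow> 1 \<le> \<bar>inverse (\<mu> b)\<bar>" "\<And>b. b \<in> Bm \<Longrightarrow> \<bar>\<mu> b\<bar> \<le> r"
    and spans: "span Bp \<subseteq> expanding_subspace T" "span Bm \<subseteq> contracting_subspace T"
    using hyperbolic_eigenbasis[OF T] by blast
  have "linear (inv T)"
    using inj_linear_imp_inv_linear[OF T(1) bij_is_inj[OF T(2)]] .
  have "B = Bm \<union> Bp" "Wp \<inter> span Bm \<subseteq> {0}" "Wm \<inter> span Bp \<subseteq> {0}"
    using B(3) W(3,4) spans by blast+
  obtain \<alpha> where "\<alpha> \<ge> 0"
    and "\<forall>k. \<forall>u\<in>(T ^^ k) ` Wp. coord_norm B Bm u \<le> r ^ k * \<alpha> * coord_norm B Bp u"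
    using funpow_image_coord_cone[OF B(1-3) T(1) eigen(1) Bp(1) Bm(2) r(1) W(1) \<open>Wp \<inter> span Bm \<subseteq> {0}\<close>]
    by blast
  moreover obtain \<beta> where "\<beta> \<ge> 0"
    and "\<forall>k. \<forall>v\<in>(inv T ^^ k) ` Wm. coord_norm B Bp v \<le> r ^ k * \<beta> * coord_norm B Bm v"
    using funpow_image_coord_cone[OF B(1,2) \<open>B = Bm \<union> Bp\<close> \<open>linear (inv T)\<close> eigen(2) Bm(1) Bp(2) r(1) W(2)
        \<open>Wm \<inter> span Bp \<subseteq> {0}\<close>]
    by blast
  ultimately show ?thesis
    using coord_cones_eventually_apart[OF B r, of \<alpha> \<beta> "\<lambda>k. (T ^^ k) ` Wp" "\<lambda>k. (inv T ^^ k) ` Wm"]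
    by blast
qed

lemma vec_angle_unit:
  fixes u v :: "'a::real_inner"
  assumes "norm u = 1" "norm v = 1"
  shows "vec_angle u v = arccos (1 - (norm (u - v))\<^sup>2 / 2)"
proof -
  have "(norm (u - v))\<^sup>2 = (norm u)\<^sup>2 - 2 * (u \<bullet> v) + (norm v)\<^sup>2"
    by (simp add: power2_norm_eq_inner inner_diff inner_commute algebra_simps)
  then have "1 - (norm (u - v))\<^sup>2 / 2 = u \<bullet> v"
    using assms by (simp add: field_simps)
  then show ?thesis
    unfolding vec_angle_def using assms by simp
qed

lemma vec_angle_bounded_below:
  assumes "\<delta> > 0"
  shows "\<exists>\<epsilon>>0. \<forall>u v :: 'a::real_inner. norm u = 1 \<longrightarrow> norm v = 1 \<longrightarrow> \<delta> \<le> norm (u - v) \<longrightarrow> \<epsilon> \<le> vec_angle u v"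
proof (intro exI[of _ "arccos (1 - (min \<delta> 2)\<^sup>2 / 2)"] conjI allI impI)
  have "(min \<delta> 2)\<^sup>2 \<le> 2\<^sup>2"
    by (rule power_mono) (use assms in auto)
  moreover have "0 < (min \<delta> 2)\<^sup>2"
    using assms by simp
  ultimately
  show "0 < arccos (1 - (min \<delta> 2)\<^sup>2 / 2)"
    using arccos_less_arccos[of "1 - (min \<delta> 2)\<^sup>2 / 2" 1] by simp
  fix u v :: 'a
  assume uv: "norm u = 1" "norm v = 1" "\<delta> \<le> norm (u - v)"
  have "norm (u - v) \<le> 2"
    using norm_triangle_ineq4[of u v] uv by simp
  have "(min \<delta> 2)\<^sup>2 \<le> (norm (u - v))\<^sup>2"
    using uv(3) assms by (simp add: power_mono)
  moreover have "(norm (u - v))\<^sup>2 \<le> 2\<^sup>2"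
    by (rule power_mono) (use \<open>norm (u - v) \<le> 2\<close> in auto)
  ultimately show "arccos (1 - (min \<delta> 2)\<^sup>2 / 2) \<le> vec_angle u v"
    unfolding vec_angle_unit[OF uv(1,2)] by (intro arccos_le_arccos) auto
qed

lemma subspace_Int_eq_0_if_unit_apart:
  assumes "subspace U" "subspace V" "\<delta> > 0"
    and "\<And>u v. u \<in> U \<Longrightarrow> v \<in> V \<Longrightarrow> norm u = 1 \<Longrightarrow> norm v = 1 \<Longrightarrow> \<delta> \<le> norm (u - v)"
  shows "U \<inter> V = {0}"
proof (rule ccontr)
  assume "U \<inter> V \<noteq> {0}"
  then obtain z where z: "z \<in> U" "z \<in> V" "z \<noteq> 0"
    using assms(1,2) subspace_0 by blast
  let ?u = "inverse (norm z) *\<^sub>R z"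
  have "?u \<in> U" "?u \<in> V" "norm ?u = 1"
    using z assms(1,2) by (simp_all add: subspace_scale)
  then show False
    using assms(3) assms(4)[of ?u ?u] by simp
qed

lemma subspace_sums_eq_UNIV:
  fixes U V :: "'a::euclidean_space set"
  assumes "subspace U" "subspace V" "U \<inter> V = {0}" "dim U + dim V = DIM('a)"
  shows "{a + b | a b. a \<in> U \<and> b \<in> V} = UNIV"
proof -
  let ?M = "{a + b | a b. a \<in> U \<and> b \<in> V}"
  have "dim ?M = DIM('a)"
    using dim_sums_Int[OF assms(1,2)] assms(3,4) by simp
  then have "span ?M = UNIV"
    by (rule dim_eq_full[THEN iffD1])
  moreover have "span ?M = ?M"
    using subspace_sums[OF assms(1,2)] by (rule span_eq_iff[THEN iffD2])
  ultimately show ?thesis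
    by simp
qed

lemma linear_inj_funpow_image:
  fixes S :: "'a::euclidean_space \<Rightarrow> 'a"
  assumes "linear S" "inj S" "subspace W"
  shows "subspace ((S ^^ k) ` W)" "dim ((S ^^ k) ` W) = dim W"
  using linear_subspace_image[OF linear_funpow[OF assms(1)] assms(3)]
    dim_image_eq[OF linear_funpow[OF assms(1)] inj_on_subset[OF inj_fn[OF assms(2)] subset_UNIV]]
  by simp_all

theorem lemma8p2:
  fixes T :: "'a::euclidean_space \<Rightarrow> 'a"
    and Wp Wm :: "'a set"
  assumes "linear T"
    and "bij T"
    and "span (\<Union>{eigenspace T c | c. c \<noteq> 1 \<and> c \<noteq> -1}) = UNIV"
    and "subspace Wp" and "subspace Wm"
    and "dim Wp + dim Wm = DIM('a)"
    and "Wp \<inter> contracting_subspace T = {0}"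
    and "Wm \<inter> expanding_subspace T = {0}"
  shows "\<exists>K::nat.
     (\<forall>kp km. kp + km \<ge> K \<longrightarrow>
        {a + b | a b. a \<in> (T ^^ kp) ` Wp \<and> b \<in> (inv T ^^ km) ` Wm} = UNIV \<and>
        (T ^^ kp) ` Wp \<inter> (inv T ^^ km) ` Wm = {0})
   \<and> (\<exists>\<epsilon>>0. \<forall>kp km. kp + km \<ge> K \<longrightarrow>
        (\<forall>u \<in> (T ^^ kp) ` Wp. \<forall>v \<in> (inv T ^^ km) ` Wm.
           norm u = 1 \<longrightarrow> norm v = 1 \<longrightarrow> vec_angle u v \<ge> \<epsilon>))"
proof -
  obtain K \<delta> where "\<delta> > 0" and apart: "\<And>kp km u v. K \<le> kp + km \<Longrightarrow> u \<in> (T ^^ kp) ` Wp \<Longrightarrow>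
      v \<in> (inv T ^^ km) ` Wm \<Longrightarrow> norm u = 1 \<Longrightarrow> norm v = 1 \<Longrightarrow> \<delta> \<le> norm (u - v)"
    using hyperbolic_images_eventually_apart[OF assms(1-5,7,8)] by blast
  obtain \<epsilon> where "\<epsilon> > 0" and angle: "\<And>u v :: 'a. norm u = 1 \<Longrightarrow> norm v = 1 \<Longrightarrow>
      \<delta> \<le> norm (u - v) \<Longrightarrow> \<epsilon> \<le> vec_angle u v"
    using vec_angle_bounded_below[OF \<open>\<delta> > 0\<close>] by blast
  have inj: "inj T" "inj (inv T)" and "linear (inv T)"
    using assms(1,2) bij_is_inj bij_imp_bij_inv inj_linear_imp_inv_linear by blast+
  note Wp_image = linear_inj_funpow_image[OF assms(1) inj(1) assms(4)]
  note Wm_image = linear_inj_funpow_image[OF \<open>linear (inv T)\<close> inj(2) assms(5)]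
  have "(T ^^ kp) ` Wp \<inter> (inv T ^^ km) ` Wm = {0}" if "K \<le> kp + km" for kp km
    using subspace_Int_eq_0_if_unit_apart[OF Wp_image(1) Wm_image(1) \<open>\<delta> > 0\<close>] apart[OF that] by blast
  moreover have "{a + b | a b. a \<in> (T ^^ kp) ` Wp \<and> b \<in> (inv T ^^ km) ` Wm} = UNIV"
    if "K \<le> kp + km" for kp km
    using subspace_sums_eq_UNIV[OF Wp_image(1) Wm_image(1) calculation[OF that]] Wp_image(2) Wm_image(2) assms(6)
    by simp
  ultimately show ?thesis
    using \<open>\<epsilon> > 0\<close> angle[OF _ _ apart] by (intro exI[of _ K] conjI exI[of _ \<epsilon>]) auto
qed

end
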